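(* The reward-design problem (maximize $\sum_{i=1}^n x_i^*$ over feasible $(f,x_1^*,\dots,x_n^* )$) has the same optimal value as the linear program \[\begin{aligned}\text{maximize}\ & \sum_{i=1}^n x_i^*\\ \text{subject to}\ & 0\le x_i^*\le q_i,\quad i=1,\dots,n,\\ & 0\le x_1^*\le x_2^*\le\cdots\le x_n^*,\\ & C\left(\frac{x_n^*}{q_n}+\sum_{i=1}^{n-1}\left((n-i)\left(\frac{1}{q_i}-\frac{1}{q_{i+1}}\right)+\frac{1}{q_i}\right)x_i^*\right)\le B.\end{aligned}\] Moreover, if $(x_1^*,\dots,x_n^* )$ is an optimal solution of this linear program, then $(f,x_1^*,\dots,x_n^* )$ is an optimal solution of the reward-design problem, where $f(x)=0$ for $0\le x<x_1^*$ and, for $x_j^*\le x<x_{j+1}^*$ ($1\le j\le n$, $x_{n+1}^*=+\infty$), $f(x)=C\left(\sum_{t=1}^{j-1}\left(\frac{x_t^*}{q_t}-\frac{x_t^*}{q_{t+1}}\right)+\frac{x_j^*}{q_j}\right)$.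
   Context: There are $n$ agents with types $0<q_1\le q_2\le\cdots\le q_n$, a cost constant $C>0$ and a budget $B>0$. A reward function is a map $f:[0,\infty)\to[0,\infty)$; agent $i$'s utility for producing quality $x$ is $u_i(x)=f(x)-xC/q_i$. A tuple $(f,x_1^*,\dots,x_n^* )$ is feasible for the reward-design problem if for each $i$: $0\le x_i^*\le q_i$ and $u_i(x_i^* )\ge u_i(x)$ for all $x\in[0,q_i]$, and $\sum_{i=1}^n f(x_i^* )\le B$. The reward-design problem is to maximize $\sum_{i=1}^n x_i^*$ over feasible tuples. *)

theory Defs
  imports Complex_Main
begin

text \<open>Agents are indexed by 1..n; types q i, qualities x i, reward function f.
  A reward function maps [0,\<infinity>) to [0,\<infinity>); we model it as a real function that is
  nonnegative on [0,\<infinity>) (its values on negative reals are irrelevant).\<close>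

definition utility :: "(real \<Rightarrow> real) \<Rightarrow> real \<Rightarrow> real \<Rightarrow> real \<Rightarrow> real" where
  "utility f C qi y = f y - y * C / qi"

definition rd_feasible ::
  "nat \<Rightarrow> (nat \<Rightarrow> real) \<Rightarrow> real \<Rightarrow> real \<Rightarrow> (real \<Rightarrow> real) \<Rightarrow> (nat \<Rightarrow> real) \<Rightarrow> bool" where
  "rd_feasible n q C B f x \<longleftrightarrow>
     (\<forall>y\<ge>0. f y \<ge> 0) \<and>
     (\<forall>i\<in>{1..n}. 0 \<le> x i \<and> x i \<le> q i \<and>
        (\<forall>y\<in>{0..q i}. utility f C (q i) y \<le> utility f C (q i) (x i))) \<and>
     (\<Sum>i=1..n. f (x i)) \<le> B"

definition lp_feasible ::
  "nat \<Rightarrow> (nat \<Rightarrow> real) \<Rightarrow> real \<Rightarrow> real \<Rightarrow> (nat \<Rightarrow> real) \<Rightarrow> bool" where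
  "lp_feasible n q C B x \<longleftrightarrow>
     (\<forall>i\<in>{1..n}. 0 \<le> x i \<and> x i \<le> q i) \<and>
     (\<forall>i\<in>{1..<n}. x i \<le> x (i + 1)) \<and>
     C * (x n / q n +
          (\<Sum>i=1..n-1. ((real (n - i)) * (1 / q i - 1 / q (i + 1)) + 1 / q i) * x i)) \<le> B"

definition rd_values :: "nat \<Rightarrow> (nat \<Rightarrow> real) \<Rightarrow> real \<Rightarrow> real \<Rightarrow> real set" where
  "rd_values n q C B = {(\<Sum>i=1..n. x i) | f x. rd_feasible n q C B f x}"

definition lp_values :: "nat \<Rightarrow> (nat \<Rightarrow> real) \<Rightarrow> real \<Rightarrow> real \<Rightarrow> real set" where
  "lp_values n q C B = {(\<Sum>i=1..n. x i) | x. lp_feasible n q C B x}"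

text \<open>The reward function built from an LP solution x: f y = 0 for y < x 1, and for
  x j \<le> y < x (j+1) (with x (n+1) = \<infinity>) the given value; the relevant j is the
  largest index with x j \<le> y.\<close>

definition reward_f :: "nat \<Rightarrow> (nat \<Rightarrow> real) \<Rightarrow> real \<Rightarrow> (nat \<Rightarrow> real) \<Rightarrow> real \<Rightarrow> real" where
  "reward_f n q C x y =
     (if y < x 1 then 0
      else (let j = Max {j \<in> {1..n}. x j \<le> y} in
            C * ((\<Sum>t=1..j-1. x t / q t - x t / q (t + 1)) + x j / q j)))"

end

(* Both problems have the same set of attainable total qualities.
   If f is a feasible reward, single crossing of the utilities forces the chosen qualities to be
   sorted by type, up to exchanging agents of equal type.  Type k+1 may imitate type k and type 1
   may abstain, so f at the k-th quality is at least C times the telescoping sum payment q x k;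
   summing over k gives exactly the left-hand side of the budget constraint of the LP.
   Conversely, the staircase reward built from an LP solution pays exactly C * payment q x k at
   the k-th quality, and seen from type i the steps of the staircase are priced so that no other
   quality is more attractive than the i-th one. *)

theory Submission
  imports Defs "HOL-Combinatorics.Permutations"
begin

definition best_response :: "(real \<Rightarrow> real) \<Rightarrow> real \<Rightarrow> real \<Rightarrow> real \<Rightarrow> bool" where
  "best_response f C qi v \<longleftrightarrow> v \<in> {0..qi} \<and> (\<forall>w\<in>{0..qi}. utility f C qi w \<le> utility f C qi v)"

lemma rd_feasible_iff_best_response:
  "rd_feasible n q C B f x \<longleftrightarrow>
     (\<forall>y\<ge>0. 0 \<le> f y) \<and> (\<forall>i\<in>{1..n}. best_response f C (q i) (x i)) \<and> (\<Sum>i=1..n. f (x i)) \<le> B"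
  unfolding rd_feasible_def best_response_def by auto

lemma best_response_mono:
  assumes "C > 0" "s < t" "best_response f C s a" "best_response f C t b"
  shows "a \<le> b"
proof (rule ccontr)
  assume "\<not> a \<le> b"
  then have ba: "b < a" by simp
  have s_pos: "0 < s" and "a \<le> t" "0 \<le> b" "b \<le> s"
    using assms(2-4) ba unfolding best_response_def by auto
  then have "utility f C s b \<le> utility f C s a" "utility f C t a \<le> utility f C t b"
    using assms(3,4) unfolding best_response_def by auto
  then have "(a - b) * C / t \<ge> (a - b) * C / s"
    unfolding utility_def by (simp add: diff_divide_distrib left_diff_distrib)
  moreover have "(a - b) * C / t < (a - b) * C / s"
    using ba assms(1,2) s_pos by (intro divide_strict_left_mono) auto
  ultimately show False by simp
qed

lemma sorting_permutation_respecting_types: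
  fixes q :: "nat \<Rightarrow> 'a::linorder" and y :: "nat \<Rightarrow> real" and P :: "'a \<Rightarrow> real \<Rightarrow> bool"
  assumes q_step: "\<And>i. i \<in> {1..<n} \<Longrightarrow> q i \<le> q (Suc i)"
    and P_y: "\<And>i. i \<in> {1..n} \<Longrightarrow> P (q i) (y i)"
    and P_mono: "\<And>s t a b. s < t \<Longrightarrow> P s a \<Longrightarrow> P t b \<Longrightarrow> a \<le> b"
  obtains \<sigma> where "\<sigma> permutes {1..n}" "\<And>i. i \<in> {1..n} \<Longrightarrow> P (q i) (y (\<sigma> i))"
    "\<And>i. i \<in> {1..<n} \<Longrightarrow> y (\<sigma> i) \<le> y (\<sigma> (Suc i))"
proof -
  define S where "S = {\<sigma>. \<sigma> permutes {1..n} \<and> (\<forall>i\<in>{1..n}. P (q i) (y (\<sigma> i)))}"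
  define weight where "weight \<sigma> = (\<Sum>i=1..n. real i * y (\<sigma> i))" for \<sigma>
  \<comment> \<open>At a descent of a weight maximiser the two types agree by \<open>P_mono\<close>, so exchanging them
    would keep \<open>P\<close> and raise the weight.\<close>
  have "finite S"
    unfolding S_def by (rule finite_subset[OF _ finite_permutations[of "{1..n}"]]) auto
  moreover have "id \<in> S"
    unfolding S_def using P_y by (simp add: permutes_id)
  ultimately obtain \<sigma> where \<sigma>: "\<sigma> \<in> S" and \<sigma>_max: "\<And>\<tau>. \<tau> \<in> S \<Longrightarrow> weight \<tau> \<le> weight \<sigma>"
    using ex_is_arg_min_if_finite[of S "\<lambda>\<sigma>. - weight \<sigma>"] unfolding is_arg_min_def
    by (metis empty_iff neg_less_iff_less not_le)
  have sorted: "y (\<sigma> i) \<le> y (\<sigma> (Suc i))" if i: "i \<in> {1..<n}" for i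
  proof (rule ccontr)
    assume "\<not> ?thesis"
    then have descent: "y (\<sigma> (Suc i)) < y (\<sigma> i)" by simp
    have i_in: "i \<in> {1..n}" "Suc i \<in> {1..n}" using i by auto
    have same_type: "q i = q (Suc i)"
    proof (rule ccontr)
      assume "q i \<noteq> q (Suc i)"
      with q_step[OF i] have "q i < q (Suc i)" by simp
      with P_mono have "y (\<sigma> i) \<le> y (\<sigma> (Suc i))" using \<sigma> i_in unfolding S_def by blast
      with descent show False by simp
    qed
    define \<tau> where "\<tau> = \<sigma> \<circ> transpose i (Suc i)"
    have "\<tau> \<in> S"
      unfolding S_def
    proof (intro CollectI conjI ballI)
      show "\<tau> permutes {1..n}"
        unfolding \<tau>_def using \<sigma> i_in unfolding S_def by (intro permutes_compose permutes_swap_id) auto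
      have "P (q i) (y (\<sigma> i))" "P (q (Suc i)) (y (\<sigma> (Suc i)))"
        using \<sigma> i_in unfolding S_def by blast+
      moreover fix k assume "k \<in> {1..n}"
      ultimately show "P (q k) (y (\<tau> k))"
        using \<sigma> same_type unfolding S_def \<tau>_def by (auto simp: transpose_def)
    qed
    have "weight \<tau> - weight \<sigma> = (\<Sum>k\<in>{1..n}. real k * (y (\<tau> k) - y (\<sigma> k)))"
      unfolding weight_def by (simp add: sum_subtractf algebra_simps)
    also have "\<dots> = (\<Sum>k\<in>{i, Suc i}. real k * (y (\<tau> k) - y (\<sigma> k)))"
      using i_in by (intro sum.mono_neutral_right) (auto simp: \<tau>_def)
    also have "\<dots> = y (\<sigma> i) - y (\<sigma> (Suc i))"
      by (simp add: \<tau>_def algebra_simps)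
    finally have "weight \<sigma> < weight \<tau>" using descent by simp
    with \<sigma>_max[OF \<open>\<tau> \<in> S\<close>] show False by simp
  qed
  show ?thesis using that \<sigma> sorted unfolding S_def by blast
qed

lemma sum_sum_atLeastLessThan_triangle:
  fixes a :: "nat \<Rightarrow> 'a::comm_semiring_1"
  shows "(\<Sum>k=1..n. \<Sum>t=1..<k. a t) = (\<Sum>t=1..<n. of_nat (n - t) * a t)"
proof (induction n)
  case (Suc n)
  have "(\<Sum>t=1..<Suc n. of_nat (Suc n - t) * a t)
      = (\<Sum>t=1..<Suc n. of_nat (n - t) * a t + a t)"
    by (intro sum.cong) (auto simp: Suc_diff_le algebra_simps)
  also have "\<dots> = (\<Sum>t=1..<n. of_nat (n - t) * a t) + (\<Sum>t=1..<Suc n. a t)"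
    by (cases n) (simp_all add: sum.distrib)
  finally show ?case using Suc by simp
qed simp

definition payment :: "(nat \<Rightarrow> real) \<Rightarrow> (nat \<Rightarrow> real) \<Rightarrow> nat \<Rightarrow> real" where
  "payment q x k = (\<Sum>t=1..k-1. x t / q t - x t / q (t + 1)) + x k / q k"

lemma payment_1: "payment q x 1 = x 1 / q 1"
  by (simp add: payment_def)

lemma payment_Suc:
  assumes "1 \<le> k"
  shows "payment q x (Suc k) = payment q x k + (x (Suc k) - x k) / q (Suc k)"
proof -
  obtain m where "k = Suc m" using assms by (cases k) auto
  then show ?thesis by (simp add: payment_def diff_divide_distrib)
qed

lemma reward_f_eq_payment:
  "reward_f n q C x y = (if y < x 1 then 0 else C * payment q x (Max {j \<in> {1..n}. x j \<le> y}))"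
  by (simp add: reward_f_def payment_def Let_def)

lemma sum_payment_eq_lp_cost:
  assumes "1 \<le> n"
  shows "(\<Sum>k=1..n. payment q x k)
       = x n / q n + (\<Sum>i=1..n-1. (real (n - i) * (1 / q i - 1 / q (i + 1)) + 1 / q i) * x i)"
proof -
  have pred_upper: "{1..k-1} = {1..<k}" for k :: nat by (cases k) auto
  define d where "d t = x t / q t - x t / q (t + 1)" for t
  have "(\<Sum>k=1..n. payment q x k) = (\<Sum>k=1..n. \<Sum>t=1..<k. d t) + (\<Sum>k=1..n. x k / q k)"
    unfolding payment_def pred_upper d_def by (simp add: sum.distrib)
  also have "\<dots> = (\<Sum>t=1..<n. real (n - t) * d t + x t / q t) + x n / q n"
    unfolding sum_sum_atLeastLessThan_triangle sum.last_plus[OF assms] by (simp add: sum.distrib)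
  also have "\<dots> = x n / q n + (\<Sum>i=1..<n. (real (n - i) * (1 / q i - 1 / q (i + 1)) + 1 / q i) * x i)"
    by (simp add: d_def divide_inverse algebra_simps)
  finally show ?thesis by (simp only: pred_upper)
qed

locale reward_design =
  fixes n :: nat and q :: "nat \<Rightarrow> real" and C :: real
  assumes n_pos: "1 \<le> n"
    and q_pos: "\<And>i. i \<in> {1..n} \<Longrightarrow> 0 < q i"
    and q_step: "\<And>i. i \<in> {1..<n} \<Longrightarrow> q i \<le> q (Suc i)"
    and C_pos: "0 < C"
begin

lemma q_mono: "1 \<le> i \<Longrightarrow> i \<le> j \<Longrightarrow> j \<le> n \<Longrightarrow> q i \<le> q j"
  using lift_Suc_mono_le_ivl[of "{1..<n}" q i j] q_step by auto

lemma reward_f_above: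
  assumes "x 1 \<le> y"
  obtains m where "m \<in> {1..n}" "x m \<le> y" "\<And>i. i \<in> {1..n} \<Longrightarrow> x i \<le> y \<Longrightarrow> i \<le> m"
    "reward_f n q C x y = C * payment q x m"
proof -
  define J where "J = {j \<in> {1..n}. x j \<le> y}"
  have "finite J" "1 \<in> J" using assms n_pos by (auto simp: J_def)
  then have "Max J \<in> J" "\<And>i. i \<in> J \<Longrightarrow> i \<le> Max J" by (auto intro: Max_in)
  moreover have "reward_f n q C x y = C * payment q x (Max J)"
    using assms by (simp add: reward_f_eq_payment J_def)
  ultimately show ?thesis using that unfolding J_def by blast
qed

context
  fixes x :: "nat \<Rightarrow> real"
  assumes x_step: "\<And>i. i \<in> {1..<n} \<Longrightarrow> x i \<le> x (Suc i)"
begin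

lemma x_mono: "1 \<le> i \<Longrightarrow> i \<le> j \<Longrightarrow> j \<le> n \<Longrightarrow> x i \<le> x j"
  using lift_Suc_mono_le_ivl[of "{1..<n}" x i j] x_step by auto

lemma payment_mono:
  assumes "1 \<le> i" "i \<le> j" "j \<le> n"
  shows "payment q x i \<le> payment q x j"
proof -
  have "payment q x k \<le> payment q x (Suc k)" if "k \<in> {1..<n}" for k
    using x_step[OF that] q_pos[of "Suc k"] that by (simp add: payment_Suc)
  then show ?thesis using lift_Suc_mono_le_ivl[of "{1..<n}" "payment q x" i j] assms by auto
qed

text \<open>For type \<open>i\<close> the menu items \<open>(x j, C * payment q x j)\<close> get better up to \<open>j = i\<close> and
  worse afterwards, since step \<open>j\<close> prices the quality increment at rate \<open>1 / q (Suc j)\<close>.\<close>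

lemma payment_deviation_le:
  assumes "i \<in> {1..n}" "j \<in> {1..n}"
  shows "payment q x j - x j / q i \<le> payment q x i - x i / q i"
proof -
  define h where "h m = payment q x m - x m / q i" for m
  have h_Suc: "h (Suc m) = h m + (x (Suc m) - x m) * (1 / q (Suc m) - 1 / q i)" if "1 \<le> m" for m
    using that by (simp add: h_def payment_Suc diff_divide_distrib algebra_simps)
  have "h m \<le> h (Suc m)" if "m \<in> {1..<i}" for m
  proof -
    have "1 / q i \<le> 1 / q (Suc m)"
      using that assms q_pos q_mono[of "Suc m" i] by (intro divide_left_mono) auto
    then show ?thesis using h_Suc x_step that assms by auto
  qed
  moreover have "h (Suc m) \<le> h m" if "m \<in> {i..<n}" for m
  proof -
    have "1 / q (Suc m) \<le> 1 / q i"
      using that assms q_pos q_mono[of i "Suc m"] by (intro divide_left_mono) auto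
    then show ?thesis using h_Suc[of m] x_step[of m] that assms
      by (auto intro: mult_nonneg_nonpos)
  qed
  ultimately have "h j \<le> h i"
    using lift_Suc_mono_le_ivl[of "{1..<i}" h j i] lift_Suc_antimono_le_ivl[of "{i..<n}" h i j] assms
    by (cases "j \<le> i") auto
  then show ?thesis by (simp add: h_def)
qed

lemma reward_f_allocation:
  assumes "i \<in> {1..n}"
  shows "reward_f n q C x (x i) = C * payment q x i"
proof -
  obtain m where m: "m \<in> {1..n}" "x m \<le> x i" "\<And>k. k \<in> {1..n} \<Longrightarrow> x k \<le> x i \<Longrightarrow> k \<le> m"
    and reward: "reward_f n q C x (x i) = C * payment q x m"
    using reward_f_above[of x "x i"] x_mono[of 1 i] assms by auto
  have "i \<le> m" using m(3) assms by simp
  then have "x m = x i" using x_mono[of i m] m assms by auto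
  then have "payment q x m = payment q x i"
    using payment_deviation_le[OF assms m(1)] payment_mono[of i m] \<open>i \<le> m\<close> m assms by auto
  then show ?thesis using reward by simp
qed

context
  assumes x_1_nonneg: "0 \<le> x 1"
begin

lemma reward_f_nonneg: "0 \<le> reward_f n q C x y"
proof (cases "y < x 1")
  case False
  then obtain m where "m \<in> {1..n}" "reward_f n q C x y = C * payment q x m"
    using reward_f_above[of x y] by auto
  moreover have "0 \<le> payment q x 1" using x_1_nonneg q_pos[of 1] n_pos payment_1[of q x] by simp
  ultimately show ?thesis using payment_mono[of 1 m] C_pos by auto
qed (simp add: reward_f_eq_payment)

lemma best_response_reward_f:
  assumes i: "i \<in> {1..n}" and "x i \<le> q i"
  shows "best_response (reward_f n q C x) C (q i) (x i)"
proof -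
  have "reward_f n q C x w \<le> C * (payment q x i - x i / q i + w / q i)" if w: "w \<in> {0..q i}" for w
  proof (cases "w < x 1")
    case True
    have "x 1 / q i \<le> x 1 / q 1"
      using x_1_nonneg q_pos q_mono[of 1 i] i by (intro divide_left_mono) auto
    then have "0 \<le> payment q x i - x i / q i"
      using payment_deviation_le[OF i, of 1] payment_1[of q x] i n_pos by auto
    then show ?thesis using True w q_pos[OF i] C_pos by (simp add: reward_f_eq_payment)
  next
    case False
    then obtain m where m: "m \<in> {1..n}" "x m \<le> w" "reward_f n q C x w = C * payment q x m"
      using reward_f_above[of x w] by auto
    have "payment q x m \<le> payment q x m - x m / q i + w / q i"
      using m(2) q_pos[OF i] by (simp add: divide_right_mono)
    also have "\<dots> \<le> payment q x i - x i / q i + w / q i"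
      using payment_deviation_le[OF i m(1)] by simp
    finally show ?thesis using m(3) C_pos by simp
  qed
  moreover have "0 \<le> x i" using x_1_nonneg x_mono[of 1 i] i by auto
  ultimately show ?thesis
    using assms reward_f_allocation[OF i]
    by (auto simp: best_response_def utility_def algebra_simps)
qed

end

end

lemma lp_feasible_imp_rd_feasible:
  assumes "lp_feasible n q C B x"
  shows "rd_feasible n q C B (reward_f n q C x) x"
proof -
  have x_step: "\<And>i. i \<in> {1..<n} \<Longrightarrow> x i \<le> x (Suc i)"
    and x_bounds: "\<And>i. i \<in> {1..n} \<Longrightarrow> 0 \<le> x i \<and> x i \<le> q i"
    and budget: "C * (x n / q n + (\<Sum>i=1..n-1. (real (n - i) * (1 / q i - 1 / q (i + 1)) + 1 / q i) * x i)) \<le> B"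
    using assms unfolding lp_feasible_def by auto
  have x_1_nonneg: "0 \<le> x 1" using x_bounds n_pos by auto
  have "(\<Sum>i=1..n. reward_f n q C x (x i)) = C * (\<Sum>i=1..n. payment q x i)"
    using reward_f_allocation[where x = x, OF x_step] by (simp add: sum_distrib_left)
  also have "\<dots> \<le> B" using budget sum_payment_eq_lp_cost[OF n_pos] by simp
  finally show ?thesis
    unfolding rd_feasible_iff_best_response
    using reward_f_nonneg[where x = x, OF x_step x_1_nonneg]
      best_response_reward_f[where x = x, OF x_step x_1_nonneg] x_bounds
    by auto
qed

lemma payment_le_best_response_reward:
  assumes g_0: "0 \<le> g 0" and br: "\<And>k. k \<in> {1..n} \<Longrightarrow> best_response g C (q k) (z k)"
    and "1 \<le> k" "k \<le> n"
  shows "C * payment q z k \<le> g (z k)"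
  using assms(3,4)
proof (induction k rule: dec_induct)
  case base
  have "utility g C (q 1) 0 \<le> utility g C (q 1) (z 1)"
    using br[of 1] n_pos q_pos[of 1] unfolding best_response_def by auto
  then show ?case using g_0 payment_1[of q z] by (simp add: utility_def mult.commute)
next
  case (step k)
  have "z k \<in> {0..q (Suc k)}"
    using br[of k] q_step[of k] step unfolding best_response_def by auto
  then have "utility g C (q (Suc k)) (z k) \<le> utility g C (q (Suc k)) (z (Suc k))"
    using br[of "Suc k"] step unfolding best_response_def by auto
  then have "g (z k) + (z (Suc k) - z k) * C / q (Suc k) \<le> g (z (Suc k))"
    unfolding utility_def by (simp add: diff_divide_distrib left_diff_distrib)
  with step show ?case by (simp add: payment_Suc algebra_simps)
qed

lemma rd_feasible_imp_lp_feasible: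
  assumes "rd_feasible n q C B g y"
  obtains z where "lp_feasible n q C B z" "(\<Sum>i=1..n. z i) = (\<Sum>i=1..n. y i)"
proof -
  have g_0: "0 \<le> g 0" and br: "\<And>i. i \<in> {1..n} \<Longrightarrow> best_response g C (q i) (y i)"
    and budget: "(\<Sum>i=1..n. g (y i)) \<le> B"
    using assms unfolding rd_feasible_iff_best_response by auto
  obtain \<sigma> where \<sigma>: "\<sigma> permutes {1..n}"
    and br_\<sigma>: "\<And>i. i \<in> {1..n} \<Longrightarrow> best_response g C (q i) (y (\<sigma> i))"
    and sorted: "\<And>i. i \<in> {1..<n} \<Longrightarrow> y (\<sigma> i) \<le> y (\<sigma> (Suc i))"
    using sorting_permutation_respecting_types[of n q "best_response g C" y]
      q_step br best_response_mono[OF C_pos] by blast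
  define z where "z = y \<circ> \<sigma>"
  have rearranged: "(\<Sum>i=1..n. h (z i)) = (\<Sum>i=1..n. h (y i))" for h :: "real \<Rightarrow> real"
    unfolding z_def using sum.reindex_bij_betw[OF permutes_imp_bij[OF \<sigma>], of "h \<circ> y"] by simp
  have "C * (z n / q n + (\<Sum>i=1..n-1. (real (n - i) * (1 / q i - 1 / q (i + 1)) + 1 / q i) * z i))
      = C * (\<Sum>k=1..n. payment q z k)"
    by (simp only: sum_payment_eq_lp_cost[OF n_pos])
  also have "\<dots> = (\<Sum>k=1..n. C * payment q z k)"
    by (rule sum_distrib_left)
  also have "\<dots> \<le> (\<Sum>k=1..n. g (z k))"
    using payment_le_best_response_reward[where g = g and z = z, OF g_0] br_\<sigma>
    by (intro sum_mono) (auto simp: z_def)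
  also have "\<dots> \<le> B" using rearranged[of g] budget by simp
  finally have "lp_feasible n q C B z"
    using br_\<sigma> sorted unfolding lp_feasible_def best_response_def z_def by auto
  then show ?thesis using that rearranged[of id] by simp
qed

lemma rd_values_eq_lp_values: "rd_values n q C B = lp_values n q C B"
  unfolding rd_values_def lp_values_def
proof safe
  fix g y assume "rd_feasible n q C B g y"
  then obtain z where "lp_feasible n q C B z" "(\<Sum>i=1..n. z i) = (\<Sum>i=1..n. y i)"
    by (rule rd_feasible_imp_lp_feasible)
  then show "\<exists>x. (\<Sum>i=1..n. y i) = (\<Sum>i=1..n. x i) \<and> lp_feasible n q C B x" by metis
next
  fix x assume "lp_feasible n q C B x"
  then show "\<exists>f y. (\<Sum>i=1..n. x i) = (\<Sum>i=1..n. y i) \<and> rd_feasible n q C B f y"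
    using lp_feasible_imp_rd_feasible by blast
qed

end

theorem theorem2:
  fixes n :: nat and q :: "nat \<Rightarrow> real" and C B :: real
  assumes n: "n \<ge> 1"
    and qpos: "\<And>i. i \<in> {1..n} \<Longrightarrow> 0 < q i"
    and qmono: "\<And>i. i \<in> {1..<n} \<Longrightarrow> q i \<le> q (i + 1)"
    and C: "C > 0" and B: "B > 0"
  shows "Sup (rd_values n q C B) = Sup (lp_values n q C B) \<and>
         (\<forall>x. lp_feasible n q C B x \<longrightarrow>
             (\<forall>y. lp_feasible n q C B y \<longrightarrow> (\<Sum>i=1..n. y i) \<le> (\<Sum>i=1..n. x i)) \<longrightarrow>
             rd_feasible n q C B (reward_f n q C x) x \<and>
             (\<forall>g y. rd_feasible n q C B g y \<longrightarrow> (\<Sum>i=1..n. y i) \<le> (\<Sum>i=1..n. x i)))"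
proof -
  interpret reward_design n q C
    using n qpos qmono C by unfold_locales simp_all
  have "(\<Sum>i=1..n. y i) \<le> (\<Sum>i=1..n. x i)"
    if "\<forall>z. lp_feasible n q C B z \<longrightarrow> (\<Sum>i=1..n. z i) \<le> (\<Sum>i=1..n. x i)"
      and "rd_feasible n q C B g y" for x g y
    using rd_feasible_imp_lp_feasible[OF that(2)] that(1) by metis
  then show ?thesis
    using rd_values_eq_lp_values lp_feasible_imp_rd_feasible by simp
qed

end
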